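(* Consider a federated learning system with $m$ clients, a hypothesis space $\mathcal{W}$, a loss function $\ell:\mathcal{W}\times\mathcal{Z}\to\mathbb{R}$, scheduled collection times $\mathcal{T}_{\mathrm{c}}=\{t_{\mathrm{c},i}\}_{i\in[m]}$ with $t_{\mathrm{c},i}\in\{1,\dots,t_{\mathrm{agg}}\}$, and privacy levels $\mathcal{E}_{\mathrm{c}}=\{\epsilon_{\mathrm{c},i}\}_{i\in[m]}$, $\epsilon_{\mathrm{c},i}\ge 0$. Let $$\tilde{W}(\mathcal{T}_{\mathrm{c}},\mathcal{E}_{\mathrm{c}})=W(\mathcal{T}_{\mathrm{c}},\mathcal{E}_{\mathrm{c}})+N:=\frac{1}{m}\sum_{i=1}^m\bigl(W_i^{(t_{\mathrm{c},i})}+N_i\bigr),$$ where $W_i^{(t_{\mathrm{c},i})}$ is the local model trained by client $i$ on its dataset collected at time $t_{\mathrm{c},i}$ and $N_i$ is the Laplace noise random variable added by client $i$ to satisfy $\epsilon_{\mathrm{c},i}$-DP, $i\in[m]$. Assume that the hypothesis $W=\frac{1}{m}\sum_{i=1}^m W_i^{(t_{\mathrm{c},i})}\in\mathcal{W}$ is distributed according to $P_W$ induced by some algorithm, and that for each $i\in[m]$ the cumulant generating function of the random variable $\ell(W+N,Z_i^{(t_{\mathrm{agg}})})-\mathbb{E}[\ell(W+N,Z_i^{(t_{\mathrm{agg}})})]$ under the product distribution $P_W\otimes P_N\otimes\mu_i$ is upper bounded by some function $\psi_i(\lambda)$ for $\lambda$ in an interval $(b_{i,-},b_{i,+})$ with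 $b_{i,-}<0<b_{i,+}$. Then $$\mathbb{E}\Bigl[\hat{\mathsf{L}}\bigl(\tilde{W}(\mathcal{T}_{\mathrm{c}},\mathcal{E}_{\mathrm{c}}),\mathcal{D}^{(t_{\mathrm{agg}})}\bigr)-\hat{\mathsf{L}}(w^\ast,\mathcal{D}^{(t_{\mathrm{agg}})})\Bigr]\le\sum_{i=1}^m p_i\frac{1}{|\mathcal{D}_i|}\sum_{j=1}^{|\mathcal{D}_i|}\psi_{i,+}^{*-1}\Bigl(I\bigl(W;Z_{i,j}^{(t_{\mathrm{agg}})}\bigr)\Bigr)+\bar{\mathsf{L}}(w^\ast)-\mathbb{E}_{\mathcal{D}^{(t_{\mathrm{agg}})}}\bigl[\hat{\mathsf{L}}(w^\ast,\mathcal{D}^{(t_{\mathrm{agg}})})\bigr]+\mathbb{E}\bigl[\mathsf{R}(\tilde{W}(\mathcal{T}_{\mathrm{c}},\mathcal{E}_{\mathrm{c}}))\bigr],$$ where $$\psi_{i,+}^{*-1}(x):=\inf_{\lambda\in[0,b_{i,+}]}\frac{x+\psi_i(\lambda)}{\lambda},\qquad \mathsf{R}(w):=\bar{\mathsf{L}}(w)-\bar{\mathsf{L}}(w^\ast),$$ and the expectation is taken over the distribution $P_{W,N,\mathcal{D}_i^{(t_{\mathrm{agg}})}}$, $i\in[m]$. Furthermore, if $W+N\in\mathcal{W}$ for every $W\in\mathcal{W}$, then $$\mathbb{E}\bigl[\mathsf{R}(\tilde{W}(\mathcal{T}_{\mathrm{c}},\mathcal{E}_{\mathrm{c}}))\b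igr]\le\sup_{w\in\mathcal{W}}\bar{\mathsf{L}}(w)-\bar{\mathsf{L}}(w^\ast).$$
   Context: Setting: for each client $i\in[m]$ the data evolve as a discrete-time stationary (Markov) process; $\mathcal{D}_i^{(t)}=\{Z_{i,1}^{(t)},\dots,Z_{i,|\mathcal{D}_i|}^{(t)}\}$ denotes client $i$'s dataset collected at time $t$, whose size $|\mathcal{D}_i|$ does not depend on $t$ (so $|\mathcal{D}_i|=|\mathcal{D}_i^{(t_{\mathrm{c},i})}|=|\mathcal{D}_i^{(t_{\mathrm{agg}})}|$). $\mathcal{D}^{(t)}$ denotes the collection of all clients' datasets at time $t$. The weights are $p_i=|\mathcal{D}_i|/|\mathcal{D}|$ with $|\mathcal{D}|=\sum_{i=1}^m|\mathcal{D}_i|$. Each data point $Z_{i,j}^{(t_{\mathrm{agg}})}$ (written generically $Z_i^{(t_{\mathrm{agg}})}$) has distribution $\mu_i$, the target distribution of client $i$. The empirical loss of client $i$ for $w\in\mathcal{W}$ on a dataset $\mathcal{D}_i=\{Z_{i,1},\dots,Z_{i,|\mathcal{D}_i|}\}$ is $\hat{\mathsf{L}}_i(w,\mathcal{D}_i)=\frac{1}{|\mathcal{D}_i|}\sum_{j=1}^{|\mathcal{D}_i|}\ell(w,Z_{i,j})$, and the global empirical loss is $\hat{\mathsf{L}}(w,\mathcal{D}^{(t)})=\sum_{i=1}^m p_i\hat{\mathsf{L}}_i(w,\mathcal{D}_i^{(t)})$. The ideal (non-private, freshest-data) ERM model is $w^\ast=\arg\min_w\hat{\mathsf{L}}(w,\mathcal{D}^{(t_{\mathrm{agg}})})$.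 The population risk of client $i$ is $\mathsf{L}_{\mu_i}(w)=\mathbb{E}_{Z_i\sim\mu_i}[\ell(w,Z_i)]$ and the average population loss is $\bar{\mathsf{L}}(w)=\sum_{i=1}^m p_i\mathsf{L}_{\mu_i}(w)$. $I(\cdot\,;\cdot)$ denotes mutual information. A randomized mechanism $M$ is $\epsilon_{\mathrm{c}}$-DP if for all datasets $\mathcal{D},\mathcal{D}'$ differing in one data point and all measurable $\mathcal{S}$, $\Pr[M(\mathcal{D})\in\mathcal{S}]\le e^{\epsilon_{\mathrm{c}}}\Pr[M(\mathcal{D}')\in\mathcal{S}]$. *)

theory Defs
  imports "HOL-Probability.Probability"
begin

definition client_weight :: "nat \<Rightarrow> (nat \<Rightarrow> nat) \<Rightarrow> nat \<Rightarrow> real" where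
  "client_weight m n i = real (n i) / (\<Sum>k<m. real (n k))"

definition local_emp_loss :: "('w \<Rightarrow> 'z \<Rightarrow> real) \<Rightarrow> nat \<Rightarrow> (nat \<Rightarrow> 'z) \<Rightarrow> 'w \<Rightarrow> real" where
  "local_emp_loss loss n D w = (1 / real n) * (\<Sum>j<n. loss w (D j))"

definition global_emp_loss ::
  "('w \<Rightarrow> 'z \<Rightarrow> real) \<Rightarrow> nat \<Rightarrow> (nat \<Rightarrow> nat) \<Rightarrow> (nat \<Rightarrow> nat \<Rightarrow> 'z) \<Rightarrow> 'w \<Rightarrow> real" where
  "global_emp_loss loss m n D w = (\<Sum>i<m. client_weight m n i * local_emp_loss loss (n i) (D i) w)"

definition pop_risk :: "('w \<Rightarrow> 'z \<Rightarrow> real) \<Rightarrow> 'z measure \<Rightarrow> 'w \<Rightarrow> real" where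
  "pop_risk loss \<mu> w = (\<integral>z. loss w z \<partial>\<mu>)"

definition avg_pop_loss ::
  "('w \<Rightarrow> 'z \<Rightarrow> real) \<Rightarrow> nat \<Rightarrow> (nat \<Rightarrow> nat) \<Rightarrow> (nat \<Rightarrow> 'z measure) \<Rightarrow> 'w \<Rightarrow> real" where
  "avg_pop_loss loss m n \<mu> w = (\<Sum>i<m. client_weight m n i * pop_risk loss (\<mu> i) w)"

definition cgf :: "'a measure \<Rightarrow> ('a \<Rightarrow> real) \<Rightarrow> real \<Rightarrow> real" where
  "cgf P f lam = ln (\<integral>x. exp (lam * f x) \<partial>P)"

definition psi_star_inv :: "(real \<Rightarrow> real) \<Rightarrow> ereal \<Rightarrow> real \<Rightarrow> real" where
  "psi_star_inv \<psi> bplus x = (INF lam\<in>{lam. 0 < lam \<and> ereal lam < bplus}. (x + \<psi> lam) / lam)"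

definition laplace_vec_density :: "real \<Rightarrow> 'a::euclidean_space \<Rightarrow> real" where
  "laplace_vec_density s x = (\<Prod>b\<in>Basis. exp (- \<bar>x \<bullet> b\<bar> / s) / (2 * s))"

end

(*
  For a fixed client i and sample j, write Z for the data point, c for the expected loss
  of w + v at z under P_W x P_N x mu_i, and D for the density of the joint law of (W, Z)
  with respect to P_W x P_Z.  Since the noise N is independent of (W, Z), dividing
  exp (lam * (loss (W + N) Z - c)) by D (W, Z) and taking expectations is the same as
  integrating against the fully decoupled law P_W x P_N x P_Z, where the integral is
  exp (cgf lam).  Jensen's inequality for ln then gives the Donsker-Varadhan bound
  lam * (E loss (W + N) Z - c) <= I(W; Z) + psi_i lam, and optimising over
  0 < lam < b_+ gives the psi_star_inv term.  By Fubini and the independence of W and N,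
  c is also the expected population risk of W + N, so averaging over samples and clients
  bounds the expected empirical loss of W + N by the information terms plus its expected
  average population loss; the terms involving w* cancel.  The final claim only bounds an
  expectation by a supremum.
*)

theory Submission
  imports Defs
begin

lemma measurable_sigma_of_preimages:
  assumes "G \<subseteq> Pow \<Omega>" "f \<in> \<Omega> \<rightarrow> space S" "\<And>A. A \<in> sets S \<Longrightarrow> f -` A \<inter> \<Omega> \<in> G"
  shows "f \<in> measurable (sigma \<Omega> G) S"
  using assms by (intro measurableI) (auto intro: sigma_sets.Basic)

lemma (in prob_space) indep_set_commute: "indep_set A B \<Longrightarrow> indep_set B A"
  unfolding indep_sets2_eq by (metis Int_commute mult.commute)

lemma (in prob_space) distr_pair_eq_pair_measure_if_indep_set:
  assumes indep: "indep_set (sigma_sets (space M) A) (sigma_sets (space M) B)"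
    and A: "A \<subseteq> Pow (space M)" and B: "B \<subseteq> Pow (space M)"
    and X: "X \<in> measurable M S" "X \<in> measurable (sigma (space M) A) S"
    and Y: "Y \<in> measurable M T" "Y \<in> measurable (sigma (space M) B) T"
  shows "distr M S X \<Otimes>\<^sub>M distr M T Y = distr M (S \<Otimes>\<^sub>M T) (\<lambda>\<omega>. (X \<omega>, Y \<omega>))"
proof -
  interpret PX: prob_space "distr M S X" using X(1) by (rule prob_space_distr)
  interpret PY: prob_space "distr M T Y" using Y(1) by (rule prob_space_distr)
  have X_events: "X -` C \<inter> space M \<in> sigma_sets (space M) A" if "C \<in> sets S" for C
    using measurable_sets[OF X(2) that] A by simp
  have Y_events: "Y -` C \<inter> space M \<in> sigma_sets (space M) B" if "C \<in> sets T" for C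
    using measurable_sets[OF Y(2) that] B by simp
  show ?thesis
  proof (rule pair_measure_eqI)
    fix C E assume C: "C \<in> sets (distr M S X)" and E: "E \<in> sets (distr M T Y)"
    have "(\<lambda>\<omega>. (X \<omega>, Y \<omega>)) -` (C \<times> E) \<inter> space M = (X -` C \<inter> space M) \<inter> (Y -` E \<inter> space M)"
      by auto
    moreover have "prob ((X -` C \<inter> space M) \<inter> (Y -` E \<inter> space M))
        = prob (X -` C \<inter> space M) * prob (Y -` E \<inter> space M)"
      using indep X_events Y_events C E by (simp add: indep_sets2_eq)
    ultimately show "emeasure (distr M S X) C * emeasure (distr M T Y) E
       = emeasure (distr M (S \<Otimes>\<^sub>M T) (\<lambda>\<omega>. (X \<omega>, Y \<omega>))) (C \<times> E)"
      using C E X(1) Y(1)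
      by (simp add: emeasure_distr emeasure_eq_measure ennreal_mult)
  qed (simp_all add: PX.sigma_finite_measure_axioms PY.sigma_finite_measure_axioms)
qed

lemma ennreal_mult_divide_le: "a * (b / a) \<le> (b :: ennreal)"
proof (cases "a = 0 \<or> a = top")
  case False
  then show ?thesis
    by (simp add: ennreal_times_divide mult.commute[of a] mult_divide_eq_ennreal)
qed auto

lemma borel_measurable_RN_deriv_cong_sets:
  assumes "sets Q = sets N"
  shows "RN_deriv Q J \<in> borel_measurable N"
  using borel_measurable_RN_deriv[of Q J] unfolding measurable_cong_sets[OF assms refl] .

lemma nn_integral_divide_RN_deriv_le:
  assumes "sigma_finite_measure Q" "absolutely_continuous Q J" "sets J = sets Q"
    and f: "f \<in> borel_measurable Q"
  shows "(\<integral>\<^sup>+x. f x / RN_deriv Q J x \<partial>J) \<le> (\<integral>\<^sup>+x. f x \<partial>Q)"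
proof -
  interpret sigma_finite_measure Q by fact
  define D where "D = RN_deriv Q J"
  have D: "D \<in> borel_measurable Q"
    unfolding D_def by (rule borel_measurable_RN_deriv)
  have "J = density Q D"
    using assms unfolding D_def by (simp add: density_RN_deriv)
  then have "(\<integral>\<^sup>+x. f x / D x \<partial>J) = (\<integral>\<^sup>+x. D x * (f x / D x) \<partial>Q)"
    using D f by (simp add: nn_integral_density)
  also have "\<dots> \<le> (\<integral>\<^sup>+x. f x \<partial>Q)"
    by (intro nn_integral_mono ennreal_mult_divide_le)
  finally show ?thesis
    unfolding D_def .
qed

lemma (in sigma_finite_measure) AE_RN_deriv_pos_finite:
  assumes "sigma_finite_measure N" "absolutely_continuous M N" "sets N = sets M"
  shows "AE x in N. 0 < RN_deriv M N x \<and> RN_deriv M N x < \<infinity>"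
proof -
  have "AE x in N. RN_deriv M N x \<noteq> \<infinity>"
    using assms by (intro absolutely_continuous_AE[of N M] RN_deriv_finite) auto
  moreover have "AE x in density M (RN_deriv M N). 0 < RN_deriv M N x"
    by (subst AE_density) (auto simp: zero_less_iff_neq_zero)
  then have "AE x in N. 0 < RN_deriv M N x"
    by (simp only: density_RN_deriv[OF assms(2,3)])
  ultimately show ?thesis
    by eventually_elim (simp add: top.not_eq_extremum)
qed

lemma nn_integral_pair_measure_swap_inner:
  assumes "sigma_finite_measure A" "sigma_finite_measure B" "sigma_finite_measure C"
    and f[measurable]: "f \<in> borel_measurable ((A \<Otimes>\<^sub>M C) \<Otimes>\<^sub>M B)"
  shows "(\<integral>\<^sup>+p. f ((fst (fst p), snd p), snd (fst p)) \<partial>((A \<Otimes>\<^sub>M B) \<Otimes>\<^sub>M C))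
    = (\<integral>\<^sup>+p. f p \<partial>((A \<Otimes>\<^sub>M C) \<Otimes>\<^sub>M B))"
proof -
  interpret B: sigma_finite_measure B by fact
  interpret C: sigma_finite_measure C by fact
  interpret BC: pair_sigma_finite B C ..
  have "(\<lambda>p. f ((fst (fst p), snd p), snd (fst p))) \<in> borel_measurable ((A \<Otimes>\<^sub>M B) \<Otimes>\<^sub>M C)"
    by measurable
  from C.borel_measurable_nn_integral_fst[OF this]
  have [measurable]: "(\<lambda>xy. \<integral>\<^sup>+z. f ((fst xy, z), snd xy) \<partial>C) \<in> borel_measurable (A \<Otimes>\<^sub>M B)"
    by simp
  have [measurable]: "(\<lambda>xz. \<integral>\<^sup>+y. f (xz, y) \<partial>B) \<in> borel_measurable (A \<Otimes>\<^sub>M C)"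
    by (rule B.borel_measurable_nn_integral_fst) measurable
  have "(\<integral>\<^sup>+p. f ((fst (fst p), snd p), snd (fst p)) \<partial>((A \<Otimes>\<^sub>M B) \<Otimes>\<^sub>M C))
      = (\<integral>\<^sup>+x. \<integral>\<^sup>+y. \<integral>\<^sup>+z. f ((x, z), y) \<partial>C \<partial>B \<partial>A)"
    by (simp add: C.nn_integral_fst[symmetric] B.nn_integral_fst[symmetric])
  also have "\<dots> = (\<integral>\<^sup>+x. \<integral>\<^sup>+z. \<integral>\<^sup>+y. f ((x, z), y) \<partial>B \<partial>C \<partial>A)"
    by (intro nn_integral_cong BC.Fubini'[symmetric]) measurable
  also have "\<dots> = (\<integral>\<^sup>+p. f p \<partial>((A \<Otimes>\<^sub>M C) \<Otimes>\<^sub>M B))"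
    by (simp add: C.nn_integral_fst[symmetric] B.nn_integral_fst[symmetric])
  finally show ?thesis .
qed

lemma (in prob_space) expectation_ln_le_ln_expectation:
  fixes f :: "'a \<Rightarrow> real"
  assumes "integrable M f" "AE x in M. 0 < f x" "integrable M (\<lambda>x. ln (f x))"
  shows "(\<integral>x. ln (f x) \<partial>M) \<le> ln (\<integral>x. f x \<partial>M)"
proof -
  have "convex_on {0<..} (\<lambda>x. - ln x)"
    using ln_concave by (simp add: convex_on_iff_concave)
  then have "- ln (\<integral>x. f x \<partial>M) \<le> (\<integral>x. - ln (f x) \<partial>M)"
    using assms by (intro jensens_inequality[where q = "\<lambda>x. - ln x" and X = f and I = "{0<..}" and a = 0]) auto
  then show ?thesis
    by simp
qed

text \<open>The change of measure behind the Donsker-Varadhan bound: the integrand is evaluated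
  at ((x, y), v) on the left and at ((x, v), y) on the right.\<close>

lemma nn_integral_decouple_le:
  assumes PX: "sigma_finite_measure PX" and PY: "sigma_finite_measure PY"
    and PV: "sigma_finite_measure PV"
    and ac: "absolutely_continuous (PX \<Otimes>\<^sub>M PY) J" and sets_J: "sets J = sets (PX \<Otimes>\<^sub>M PY)"
    and e[measurable]: "e \<in> borel_measurable ((PX \<Otimes>\<^sub>M PV) \<Otimes>\<^sub>M PY)"
  shows "(\<integral>\<^sup>+p. e ((fst (fst p), snd p), snd (fst p)) / RN_deriv (PX \<Otimes>\<^sub>M PY) J (fst p) \<partial>(J \<Otimes>\<^sub>M PV))
    \<le> (\<integral>\<^sup>+p. e p \<partial>((PX \<Otimes>\<^sub>M PV) \<Otimes>\<^sub>M PY))"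
proof -
  interpret PV: sigma_finite_measure PV by fact
  interpret PXY: pair_sigma_finite PX PY
    using PX PY by (rule pair_sigma_finite.intro)
  define D where "D = RN_deriv (PX \<Otimes>\<^sub>M PY) J"
  let ?e = "\<lambda>xy v. e ((fst xy, v), snd xy)"
  have [measurable]: "D \<in> borel_measurable (PX \<Otimes>\<^sub>M PY)"
    unfolding D_def by (rule borel_measurable_RN_deriv)
  have e_swapped[measurable]: "(\<lambda>p. ?e (fst p) (snd p)) \<in> borel_measurable ((PX \<Otimes>\<^sub>M PY) \<Otimes>\<^sub>M PV)"
    by measurable
  have [measurable]: "(\<lambda>xy. \<integral>\<^sup>+v. ?e xy v \<partial>PV) \<in> borel_measurable (PX \<Otimes>\<^sub>M PY)"
    using PV.borel_measurable_nn_integral_fst[OF e_swapped] by simp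
  have "(\<lambda>p. ?e (fst p) (snd p) / D (fst p)) \<in> borel_measurable (J \<Otimes>\<^sub>M PV)"
    unfolding measurable_cong_sets[OF sets_pair_measure_cong[OF sets_J refl] refl] by measurable
  from PV.nn_integral_fst[OF this]
  have "(\<integral>\<^sup>+p. ?e (fst p) (snd p) / D (fst p) \<partial>(J \<Otimes>\<^sub>M PV)) = (\<integral>\<^sup>+xy. \<integral>\<^sup>+v. ?e xy v / D xy \<partial>PV \<partial>J)"
    by simp
  also have "\<dots> = (\<integral>\<^sup>+xy. (\<integral>\<^sup>+v. ?e xy v \<partial>PV) / D xy \<partial>J)"
  proof (intro nn_integral_cong nn_integral_divide)
    fix xy assume "xy \<in> space J"
    then have "fst xy \<in> space PX" "snd xy \<in> space PY"
      unfolding sets_eq_imp_space_eq[OF sets_J] space_pair_measure by auto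
    then show "(\<lambda>v. ?e xy v) \<in> borel_measurable PV"
      by measurable
  qed
  also have "\<dots> \<le> (\<integral>\<^sup>+xy. \<integral>\<^sup>+v. ?e xy v \<partial>PV \<partial>(PX \<Otimes>\<^sub>M PY))"
    unfolding D_def using ac sets_J
    by (intro nn_integral_divide_RN_deriv_le PXY.sigma_finite_measure_axioms) simp_all
  also have "\<dots> = (\<integral>\<^sup>+p. ?e (fst p) (snd p) \<partial>((PX \<Otimes>\<^sub>M PY) \<Otimes>\<^sub>M PV))"
    using PV.nn_integral_fst[OF e_swapped] by simp
  also have "\<dots> = (\<integral>\<^sup>+p. e p \<partial>((PX \<Otimes>\<^sub>M PV) \<Otimes>\<^sub>M PY))"
    using PX PY PV by (intro nn_integral_pair_measure_swap_inner) simp_all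
  finally show ?thesis
    unfolding D_def by simp
qed

lemma (in prob_space) expectation_exp_divide_RN_deriv_le:
  assumes X[measurable]: "X \<in> measurable M S" and Y[measurable]: "Y \<in> measurable M T"
    and V[measurable]: "V \<in> measurable M R"
    and indep: "distr M (S \<Otimes>\<^sub>M T) (\<lambda>\<omega>. (X \<omega>, Y \<omega>)) \<Otimes>\<^sub>M distr M R V
      = distr M ((S \<Otimes>\<^sub>M T) \<Otimes>\<^sub>M R) (\<lambda>\<omega>. ((X \<omega>, Y \<omega>), V \<omega>))"
    and ac: "absolutely_continuous (distr M S X \<Otimes>\<^sub>M distr M T Y) (distr M (S \<Otimes>\<^sub>M T) (\<lambda>\<omega>. (X \<omega>, Y \<omega>)))"
    and g[measurable]: "g \<in> borel_measurable ((S \<Otimes>\<^sub>M R) \<Otimes>\<^sub>M T)"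
    and exp_g_integrable: "integrable ((distr M S X \<Otimes>\<^sub>M distr M R V) \<Otimes>\<^sub>M distr M T Y) (\<lambda>p. exp (g p))"
  defines "D \<equiv> RN_deriv (distr M S X \<Otimes>\<^sub>M distr M T Y) (distr M (S \<Otimes>\<^sub>M T) (\<lambda>\<omega>. (X \<omega>, Y \<omega>)))"
  shows "AE \<omega> in M. 0 < enn2real (D (X \<omega>, Y \<omega>))"
    and "integrable M (\<lambda>\<omega>. exp (g ((X \<omega>, V \<omega>), Y \<omega>)) / enn2real (D (X \<omega>, Y \<omega>)))"
    and "(\<integral>\<omega>. exp (g ((X \<omega>, V \<omega>), Y \<omega>)) / enn2real (D (X \<omega>, Y \<omega>)) \<partial>M)
      \<le> (\<integral>p. exp (g p) \<partial>((distr M S X \<Otimes>\<^sub>M distr M R V) \<Otimes>\<^sub>M distr M T Y))"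
proof -
  define J where "J = distr M (S \<Otimes>\<^sub>M T) (\<lambda>\<omega>. (X \<omega>, Y \<omega>))"
  define P where "P = (distr M S X \<Otimes>\<^sub>M distr M R V) \<Otimes>\<^sub>M distr M T Y"
  define r where "r \<omega> = exp (g ((X \<omega>, V \<omega>), Y \<omega>)) / enn2real (D (X \<omega>, Y \<omega>))" for \<omega>
  interpret J: prob_space J
    unfolding J_def by (rule prob_space_distr) simp
  interpret Q: prob_space "distr M S X \<Otimes>\<^sub>M distr M T Y"
    by (intro prob_space_pair prob_space_distr) simp_all
  have [measurable]: "D \<in> borel_measurable (S \<Otimes>\<^sub>M T)"
    unfolding D_def by (intro borel_measurable_RN_deriv_cong_sets sets_pair_measure_cong) simp_all
  have "AE xy in J. 0 < D xy \<and> D xy < \<infinity>"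
    unfolding D_def J_def using ac
    by (intro Q.AE_RN_deriv_pos_finite J.sigma_finite_measure_axioms[unfolded J_def]) simp_all
  then have D_pos_finite: "AE \<omega> in M. 0 < D (X \<omega>, Y \<omega>) \<and> D (X \<omega>, Y \<omega>) < \<infinity>"
    unfolding J_def by (subst (asm) AE_distr_iff) auto
  then show D_pos: "AE \<omega> in M. 0 < enn2real (D (X \<omega>, Y \<omega>))"
    by eventually_elim (simp add: enn2real_positive_iff)
  have "AE \<omega> in M. ennreal (r \<omega>) = ennreal (exp (g ((X \<omega>, V \<omega>), Y \<omega>))) / D (X \<omega>, Y \<omega>)"
    using D_pos_finite
  proof eventually_elim
    case (elim \<omega>)
    then obtain d where "D (X \<omega>, Y \<omega>) = ennreal d" "0 < d"
      by (cases "D (X \<omega>, Y \<omega>)") auto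
    then show ?case
      by (simp add: r_def divide_ennreal)
  qed
  then have "(\<integral>\<^sup>+\<omega>. ennreal (r \<omega>) \<partial>M)
      = (\<integral>\<^sup>+p. ennreal (exp (g ((fst (fst p), snd p), snd (fst p)))) / D (fst p) \<partial>(J \<Otimes>\<^sub>M distr M R V))"
    unfolding J_def indep by (simp add: nn_integral_cong_AE nn_integral_distr)
  also have "\<dots> \<le> (\<integral>\<^sup>+p. ennreal (exp (g p)) \<partial>P)"
    unfolding D_def J_def P_def using ac
    by (intro nn_integral_decouple_le prob_space_imp_sigma_finite prob_space_distr) simp_all
  also have "\<dots> = ennreal (\<integral>p. exp (g p) \<partial>P)"
    using exp_g_integrable unfolding P_def by (intro nn_integral_eq_integral) simp_all
  finally have r_bound: "(\<integral>\<^sup>+\<omega>. ennreal (r \<omega>) \<partial>M) \<le> ennreal (\<integral>p. exp (g p) \<partial>P)" .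
  have [measurable]: "r \<in> borel_measurable M"
    unfolding r_def by measurable
  then show r_integrable: "integrable M r"
    using r_bound by (intro integrableI_nonneg) (auto simp: r_def top_unique less_top[symmetric])
  show "(\<integral>\<omega>. r \<omega> \<partial>M) \<le> (\<integral>p. exp (g p) \<partial>P)"
    using r_bound r_integrable D_pos
    by (subst integral_eq_nn_integral) (auto simp: r_def intro: enn2real_leI)
qed

lemma (in prob_space) mutual_information_eq_expectation_ln_RN_deriv:
  assumes X[measurable]: "X \<in> measurable M S" and Y[measurable]: "Y \<in> measurable M T"
    and entropy: "integrable (distr M (S \<Otimes>\<^sub>M T) (\<lambda>\<omega>. (X \<omega>, Y \<omega>)))
      (entropy_density (exp 1) (distr M S X \<Otimes>\<^sub>M distr M T Y) (distr M (S \<Otimes>\<^sub>M T) (\<lambda>\<omega>. (X \<omega>, Y \<omega>))))"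
  defines "D \<equiv> RN_deriv (distr M S X \<Otimes>\<^sub>M distr M T Y) (distr M (S \<Otimes>\<^sub>M T) (\<lambda>\<omega>. (X \<omega>, Y \<omega>)))"
  shows "integrable M (\<lambda>\<omega>. ln (enn2real (D (X \<omega>, Y \<omega>))))"
    and "mutual_information (exp 1) S T X Y = (\<integral>\<omega>. ln (enn2real (D (X \<omega>, Y \<omega>))) \<partial>M)"
proof -
  have entropy_density_eq: "entropy_density (exp 1) (distr M S X \<Otimes>\<^sub>M distr M T Y)
      (distr M (S \<Otimes>\<^sub>M T) (\<lambda>\<omega>. (X \<omega>, Y \<omega>))) = (\<lambda>xy. ln (enn2real (D xy)))"
    by (simp add: entropy_density_def D_def log_def fun_eq_iff)
  have [measurable]: "D \<in> borel_measurable (S \<Otimes>\<^sub>M T)"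
    unfolding D_def by (intro borel_measurable_RN_deriv_cong_sets sets_pair_measure_cong) simp_all
  show "integrable M (\<lambda>\<omega>. ln (enn2real (D (X \<omega>, Y \<omega>))))"
    using entropy unfolding entropy_density_eq by (subst (asm) integrable_distr_eq) auto
  show "mutual_information (exp 1) S T X Y = (\<integral>\<omega>. ln (enn2real (D (X \<omega>, Y \<omega>))) \<partial>M)"
    unfolding mutual_information_def KL_divergence_def entropy_density_eq
    by (rule integral_distr) auto
qed

lemma (in prob_space) donsker_varadhan_mutual_information:
  assumes X[measurable]: "X \<in> measurable M S" and Y[measurable]: "Y \<in> measurable M T"
    and V[measurable]: "V \<in> measurable M R"
    and indep: "distr M (S \<Otimes>\<^sub>M T) (\<lambda>\<omega>. (X \<omega>, Y \<omega>)) \<Otimes>\<^sub>M distr M R V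
      = distr M ((S \<Otimes>\<^sub>M T) \<Otimes>\<^sub>M R) (\<lambda>\<omega>. ((X \<omega>, Y \<omega>), V \<omega>))"
    and ac: "absolutely_continuous (distr M S X \<Otimes>\<^sub>M distr M T Y) (distr M (S \<Otimes>\<^sub>M T) (\<lambda>\<omega>. (X \<omega>, Y \<omega>)))"
    and entropy: "integrable (distr M (S \<Otimes>\<^sub>M T) (\<lambda>\<omega>. (X \<omega>, Y \<omega>)))
      (entropy_density (exp 1) (distr M S X \<Otimes>\<^sub>M distr M T Y) (distr M (S \<Otimes>\<^sub>M T) (\<lambda>\<omega>. (X \<omega>, Y \<omega>))))"
    and g[measurable]: "g \<in> borel_measurable ((S \<Otimes>\<^sub>M R) \<Otimes>\<^sub>M T)"
    and g_integrable: "integrable M (\<lambda>\<omega>. g ((X \<omega>, V \<omega>), Y \<omega>))"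
    and exp_g_integrable: "integrable ((distr M S X \<Otimes>\<^sub>M distr M R V) \<Otimes>\<^sub>M distr M T Y) (\<lambda>p. exp (g p))"
  shows "(\<integral>\<omega>. g ((X \<omega>, V \<omega>), Y \<omega>) \<partial>M)
    \<le> mutual_information (exp 1) S T X Y
      + ln (\<integral>p. exp (g p) \<partial>((distr M S X \<Otimes>\<^sub>M distr M R V) \<Otimes>\<^sub>M distr M T Y))"
proof -
  \<comment> \<open>E g - I(X; Y) = E (ln r) \<le> ln (E r), and E r is at most the decoupled integral of exp g.\<close>
  define D where "D = RN_deriv (distr M S X \<Otimes>\<^sub>M distr M T Y) (distr M (S \<Otimes>\<^sub>M T) (\<lambda>\<omega>. (X \<omega>, Y \<omega>)))"
  define L where "L = (\<lambda>\<omega>. ln (enn2real (D (X \<omega>, Y \<omega>))))"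
  define r where "r = (\<lambda>\<omega>. exp (g ((X \<omega>, V \<omega>), Y \<omega>)) / enn2real (D (X \<omega>, Y \<omega>)))"
  note r_facts = expectation_exp_divide_RN_deriv_le[OF X Y V indep ac g exp_g_integrable,
      folded D_def, folded r_def]
  note L_facts = mutual_information_eq_expectation_ln_RN_deriv[OF X Y entropy, folded D_def, folded L_def]
  have [measurable]: "D \<in> borel_measurable (S \<Otimes>\<^sub>M T)"
    unfolding D_def by (intro borel_measurable_RN_deriv_cong_sets sets_pair_measure_cong) simp_all
  have [measurable]: "r \<in> borel_measurable M" "L \<in> borel_measurable M"
    unfolding r_def L_def by measurable
  have r_pos: "AE \<omega> in M. 0 < r \<omega>"
    using r_facts(1) by eventually_elim (simp add: r_def)
  have ln_r: "AE \<omega> in M. g ((X \<omega>, V \<omega>), Y \<omega>) - L \<omega> = ln (r \<omega>)"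
    using r_facts(1) by eventually_elim (simp add: r_def L_def ln_div)
  have "(\<integral>\<omega>. g ((X \<omega>, V \<omega>), Y \<omega>) \<partial>M) - mutual_information (exp 1) S T X Y
      = (\<integral>\<omega>. g ((X \<omega>, V \<omega>), Y \<omega>) - L \<omega> \<partial>M)"
    using g_integrable L_facts by (simp add: integral_diff)
  also have "\<dots> = (\<integral>\<omega>. ln (r \<omega>) \<partial>M)"
    by (rule integral_cong_AE[OF _ _ ln_r]) measurable
  also have "\<dots> \<le> ln (\<integral>\<omega>. r \<omega> \<partial>M)"
  proof (rule expectation_ln_le_ln_expectation[OF r_facts(2) r_pos])
    show "integrable M (\<lambda>\<omega>. ln (r \<omega>))"
      using g_integrable L_facts(1) by (intro integrable_cong_AE_imp[OF _ _ ln_r]) simp_all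
  qed
  also have "\<dots> \<le> ln (\<integral>p. exp (g p) \<partial>((distr M S X \<Otimes>\<^sub>M distr M R V) \<Otimes>\<^sub>M distr M T Y))"
  proof -
    have "0 < (\<integral>\<omega>. r \<omega> \<partial>M)"
      using r_facts(2) r_pos by (intro expectation_greater) auto
    with r_facts(3) show ?thesis
      by simp
  qed
  finally show ?thesis
    by simp
qed

lemma le_psi_star_inv:
  assumes "0 < bplus" and "\<And>lam. 0 < lam \<Longrightarrow> ereal lam < bplus \<Longrightarrow> lam * a \<le> x + \<psi> lam"
  shows "a \<le> psi_star_inv \<psi> bplus x"
  unfolding psi_star_inv_def
proof (rule cINF_greatest)
  show "{lam. 0 < lam \<and> ereal lam < bplus} \<noteq> {}"
    using ereal_dense2[OF \<open>0 < bplus\<close>] by (auto simp: zero_ereal_def)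
qed (use assms in \<open>auto simp: pos_le_divide_eq mult.commute\<close>)

lemma (in prob_space) expectation_le_psi_star_inv_mutual_information:
  assumes X[measurable]: "X \<in> measurable M S" and Y[measurable]: "Y \<in> measurable M T"
    and V[measurable]: "V \<in> measurable M R"
    and indep: "distr M (S \<Otimes>\<^sub>M T) (\<lambda>\<omega>. (X \<omega>, Y \<omega>)) \<Otimes>\<^sub>M distr M R V
      = distr M ((S \<Otimes>\<^sub>M T) \<Otimes>\<^sub>M R) (\<lambda>\<omega>. ((X \<omega>, Y \<omega>), V \<omega>))"
    and ac: "absolutely_continuous (distr M S X \<Otimes>\<^sub>M distr M T Y) (distr M (S \<Otimes>\<^sub>M T) (\<lambda>\<omega>. (X \<omega>, Y \<omega>)))"
    and entropy: "integrable (distr M (S \<Otimes>\<^sub>M T) (\<lambda>\<omega>. (X \<omega>, Y \<omega>)))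
      (entropy_density (exp 1) (distr M S X \<Otimes>\<^sub>M distr M T Y) (distr M (S \<Otimes>\<^sub>M T) (\<lambda>\<omega>. (X \<omega>, Y \<omega>))))"
    and F[measurable]: "F \<in> borel_measurable ((S \<Otimes>\<^sub>M R) \<Otimes>\<^sub>M T)"
    and F_integrable: "integrable M (\<lambda>\<omega>. F ((X \<omega>, V \<omega>), Y \<omega>))"
    and bplus: "0 < bplus"
    and cgf_le: "\<And>lam. 0 < lam \<Longrightarrow> ereal lam < bplus \<Longrightarrow>
      integrable ((distr M S X \<Otimes>\<^sub>M distr M R V) \<Otimes>\<^sub>M distr M T Y) (\<lambda>p. exp (lam * (F p - c))) \<and>
      cgf ((distr M S X \<Otimes>\<^sub>M distr M R V) \<Otimes>\<^sub>M distr M T Y) (\<lambda>p. F p - c) lam \<le> \<psi> lam"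
  shows "(\<integral>\<omega>. F ((X \<omega>, V \<omega>), Y \<omega>) \<partial>M) - c
    \<le> psi_star_inv \<psi> bplus (mutual_information (exp 1) S T X Y)"
proof (rule le_psi_star_inv[OF bplus])
  fix lam :: real assume lam: "0 < lam" "ereal lam < bplus"
  have "lam * ((\<integral>\<omega>. F ((X \<omega>, V \<omega>), Y \<omega>) \<partial>M) - c) = (\<integral>\<omega>. lam * (F ((X \<omega>, V \<omega>), Y \<omega>) - c) \<partial>M)"
    using F_integrable by (simp add: prob_space)
  also have "\<dots> \<le> mutual_information (exp 1) S T X Y
      + cgf ((distr M S X \<Otimes>\<^sub>M distr M R V) \<Otimes>\<^sub>M distr M T Y) (\<lambda>p. F p - c) lam"
    unfolding cgf_def using F_integrable cgf_le[OF lam]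
    by (intro donsker_varadhan_mutual_information[OF X Y V indep ac entropy]) auto
  also have "\<dots> \<le> mutual_information (exp 1) S T X Y + \<psi> lam"
    using cgf_le[OF lam] by simp
  finally show "lam * ((\<integral>\<omega>. F ((X \<omega>, V \<omega>), Y \<omega>) \<partial>M) - c)
      \<le> mutual_information (exp 1) S T X Y + \<psi> lam" .
qed

lemma (in prob_space) expectation_integral_indep_pair:
  fixes F :: "_ \<Rightarrow> real"
  assumes X[measurable]: "X \<in> measurable M S" and V[measurable]: "V \<in> measurable M R"
    and indep: "distr M S X \<Otimes>\<^sub>M distr M R V = distr M (S \<Otimes>\<^sub>M R) (\<lambda>\<omega>. (X \<omega>, V \<omega>))"
    and "sigma_finite_measure \<nu>"
    and F: "integrable ((distr M S X \<Otimes>\<^sub>M distr M R V) \<Otimes>\<^sub>M \<nu>) F"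
  shows "integrable M (\<lambda>\<omega>. \<integral>z. F ((X \<omega>, V \<omega>), z) \<partial>\<nu>)"
    and "(\<integral>\<omega>. \<integral>z. F ((X \<omega>, V \<omega>), z) \<partial>\<nu> \<partial>M) = (\<integral>p. F p \<partial>((distr M S X \<Otimes>\<^sub>M distr M R V) \<Otimes>\<^sub>M \<nu>))"
proof -
  interpret \<nu>: sigma_finite_measure \<nu> by fact
  interpret XV: pair_sigma_finite "distr M S X \<Otimes>\<^sub>M distr M R V" \<nu>
    by (intro pair_sigma_finite.intro \<nu>.sigma_finite_measure_axioms prob_space_imp_sigma_finite
        prob_space_pair prob_space_distr) simp_all
  let ?G = "\<lambda>xv. \<integral>z. F (xv, z) \<partial>\<nu>"
  have G: "integrable (distr M (S \<Otimes>\<^sub>M R) (\<lambda>\<omega>. (X \<omega>, V \<omega>))) ?G"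
    using XV.integrable_fst'[OF F] unfolding indep .
  then have [measurable]: "?G \<in> borel_measurable (S \<Otimes>\<^sub>M R)"
    by (auto dest: borel_measurable_integrable)
  show "integrable M (\<lambda>\<omega>. \<integral>z. F ((X \<omega>, V \<omega>), z) \<partial>\<nu>)"
    using G by (subst (asm) integrable_distr_eq) auto
  have "(\<integral>\<omega>. ?G (X \<omega>, V \<omega>) \<partial>M) = (\<integral>xv. ?G xv \<partial>(distr M S X \<Otimes>\<^sub>M distr M R V))"
    unfolding indep by (rule integral_distr[symmetric]) auto
  also have "\<dots> = (\<integral>p. F p \<partial>((distr M S X \<Otimes>\<^sub>M distr M R V) \<Otimes>\<^sub>M \<nu>))"
    by (rule XV.integral_fst'[OF F])
  finally show "(\<integral>\<omega>. \<integral>z. F ((X \<omega>, V \<omega>), z) \<partial>\<nu> \<partial>M) = (\<integral>p. F p \<partial>((distr M S X \<Otimes>\<^sub>M distr M R V) \<Otimes>\<^sub>M \<nu>))" .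
qed

lemma (in prob_space) integral_diff_le_SUP_minus:
  assumes f: "integrable M (\<lambda>\<omega>. f (u \<omega>))" and h: "integrable M h"
    and u: "\<And>\<omega>. \<omega> \<in> space M \<Longrightarrow> u \<omega> \<in> H"
  shows "ereal (\<integral>\<omega>. f (u \<omega>) - h \<omega> \<partial>M) \<le> (SUP w\<in>H. ereal (f w)) - ereal (\<integral>\<omega>. h \<omega> \<partial>M)"
proof -
  have le_SUP: "ereal (f (u \<omega>)) \<le> (SUP w\<in>H. ereal (f w))" if "\<omega> \<in> space M" for \<omega>
    using u[OF that] by (rule SUP_upper)
  have "ereal (\<integral>\<omega>. f (u \<omega>) \<partial>M) \<le> (SUP w\<in>H. ereal (f w))"
  proof (cases "SUP w\<in>H. ereal (f w)")
    case (real s)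
    then have "(\<integral>\<omega>. f (u \<omega>) \<partial>M) \<le> (\<integral>\<omega>. s \<partial>M)"
      using le_SUP f by (intro integral_mono) auto
    then show ?thesis
      using real by (simp add: prob_space)
  next
    case MInf
    then show ?thesis
      using le_SUP[of "SOME \<omega>. \<omega> \<in> space M"] not_empty by (simp add: some_in_eq)
  qed simp
  then have "ereal (\<integral>\<omega>. f (u \<omega>) \<partial>M) - ereal (\<integral>\<omega>. h \<omega> \<partial>M)
      \<le> (SUP w\<in>H. ereal (f w)) - ereal (\<integral>\<omega>. h \<omega> \<partial>M)"
    by (rule ereal_minus_mono) simp
  then show ?thesis
    using f h by (simp add: integral_diff)
qed

lemma integral_global_emp_loss:
  assumes "\<And>i j. i < m \<Longrightarrow> j < n i \<Longrightarrow> integrable M (\<lambda>\<omega>. loss (w \<omega>) (D \<omega> i j))"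
  shows "integrable M (\<lambda>\<omega>. global_emp_loss loss m n (D \<omega>) (w \<omega>))"
    and "(\<integral>\<omega>. global_emp_loss loss m n (D \<omega>) (w \<omega>) \<partial>M)
      = (\<Sum>i<m. client_weight m n i * (1 / real (n i)) * (\<Sum>j<n i. \<integral>\<omega>. loss (w \<omega>) (D \<omega> i j) \<partial>M))"
proof -
  have client: "integrable M (\<lambda>\<omega>. client_weight m n i * (1 / real (n i)) * (\<Sum>j<n i. loss (w \<omega>) (D \<omega> i j)))"
    if "i < m" for i
    using assms that by (intro integrable_mult_right Bochner_Integration.integrable_sum) auto
  then show "integrable M (\<lambda>\<omega>. global_emp_loss loss m n (D \<omega>) (w \<omega>))"
    unfolding global_emp_loss_def local_emp_loss_def mult.assoc[symmetric]
    by (intro Bochner_Integration.integrable_sum) auto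
  show "(\<integral>\<omega>. global_emp_loss loss m n (D \<omega>) (w \<omega>) \<partial>M)
      = (\<Sum>i<m. client_weight m n i * (1 / real (n i)) * (\<Sum>j<n i. \<integral>\<omega>. loss (w \<omega>) (D \<omega> i j) \<partial>M))"
    unfolding global_emp_loss_def local_emp_loss_def mult.assoc[symmetric]
    using client assms by (simp add: Bochner_Integration.integral_sum)
qed

lemma expected_global_emp_loss_le:
  assumes n_pos: "\<forall>i<m. 0 < n i"
    and integrable: "\<And>i j. i < m \<Longrightarrow> j < n i \<Longrightarrow> integrable M (\<lambda>\<omega>. loss (w \<omega>) (D \<omega> i j))"
    and sample_le: "\<And>i j. i < m \<Longrightarrow> j < n i \<Longrightarrow> (\<integral>\<omega>. loss (w \<omega>) (D \<omega> i j) \<partial>M) - c i \<le> B i j"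
  shows "(\<integral>\<omega>. global_emp_loss loss m n (D \<omega>) (w \<omega>) \<partial>M)
    \<le> (\<Sum>i<m. client_weight m n i * (1 / real (n i)) * (\<Sum>j<n i. B i j)) + (\<Sum>i<m. client_weight m n i * c i)"
proof -
  have weight_nonneg: "0 \<le> client_weight m n i * (1 / real (n i))" for i
    by (simp add: client_weight_def sum_nonneg)
  have "(\<integral>\<omega>. global_emp_loss loss m n (D \<omega>) (w \<omega>) \<partial>M)
      = (\<Sum>i<m. client_weight m n i * (1 / real (n i)) * (\<Sum>j<n i. \<integral>\<omega>. loss (w \<omega>) (D \<omega> i j) \<partial>M))"
    using integrable by (rule integral_global_emp_loss(2))
  also have "\<dots> \<le> (\<Sum>i<m. client_weight m n i * (1 / real (n i)) * (\<Sum>j<n i. B i j + c i))"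
    using sample_le weight_nonneg
    by (intro sum_mono mult_left_mono) (auto simp: algebra_simps)
  also have "\<dots> = (\<Sum>i<m. client_weight m n i * (1 / real (n i)) * (\<Sum>j<n i. B i j) + client_weight m n i * c i)"
    using n_pos by (intro sum.cong) (auto simp: sum.distrib field_simps)
  finally show ?thesis
    by (simp add: sum.distrib)
qed

lemma (in prob_space) noise_independent_of_model_and_data:
  fixes Wloc :: "nat \<Rightarrow> nat \<Rightarrow> 'a \<Rightarrow> 'w::euclidean_space" and Nn :: "nat \<Rightarrow> 'a \<Rightarrow> 'w"
    and Z :: "nat \<Rightarrow> nat \<Rightarrow> nat \<Rightarrow> 'a \<Rightarrow> 'z"
  assumes indep: "indep_set
      (sigma_sets (space M) (\<Union>i<m. {Nn i -` A \<inter> space M | A. A \<in> sets borel}))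
      (sigma_sets (space M)
        ((\<Union>i t. {Wloc i t -` A \<inter> space M | A. A \<in> sets borel}) \<union>
         (\<Union>i t j. {Z i t j -` A \<inter> space M | A. A \<in> sets Mz})))"
    and Wloc[measurable]: "\<And>i t. Wloc i t \<in> borel_measurable M"
    and Z[measurable]: "\<And>i t j. Z i t j \<in> measurable M Mz"
    and Nn: "\<And>i. i < m \<Longrightarrow> Nn i \<in> borel_measurable M"
    and W_def: "W = (\<lambda>\<omega>. (1 / real m) *\<^sub>R (\<Sum>i<m. Wloc i (t_c i) \<omega>))"
    and N_def: "N = (\<lambda>\<omega>. (1 / real m) *\<^sub>R (\<Sum>i<m. Nn i \<omega>))"
  shows "distr M borel W \<Otimes>\<^sub>M distr M borel N = distr M (borel \<Otimes>\<^sub>M borel) (\<lambda>\<omega>. (W \<omega>, N \<omega>))"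
    and "distr M (borel \<Otimes>\<^sub>M Mz) (\<lambda>\<omega>. (W \<omega>, Z i t j \<omega>)) \<Otimes>\<^sub>M distr M borel N
      = distr M ((borel \<Otimes>\<^sub>M Mz) \<Otimes>\<^sub>M borel) (\<lambda>\<omega>. ((W \<omega>, Z i t j \<omega>), N \<omega>))"
proof -
  define GN where "GN = (\<Union>i<m. {Nn i -` A \<inter> space M | A. A \<in> sets borel})"
  define GR where "GR = (\<Union>i t. {Wloc i t -` A \<inter> space M | A. A \<in> sets borel}) \<union>
    (\<Union>i t j. {Z i t j -` A \<inter> space M | A. A \<in> sets Mz})"
  have GN: "GN \<subseteq> Pow (space M)" and GR: "GR \<subseteq> Pow (space M)"
    unfolding GN_def GR_def by auto
  have "Nn i \<in> borel_measurable (sigma (space M) GN)" if "i < m" for i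
    using that by (intro measurable_sigma_of_preimages[OF GN]) (auto simp: GN_def)
  then have N_GN: "N \<in> borel_measurable (sigma (space M) GN)"
    unfolding N_def by measurable
  have [measurable]: "N \<in> borel_measurable M"
    unfolding N_def using Nn by measurable
  have [measurable]: "Wloc i t \<in> borel_measurable (sigma (space M) GR)" for i t
    by (rule measurable_sigma_of_preimages[OF GR]) (auto simp: GR_def)
  have [measurable]: "Z i t j \<in> measurable (sigma (space M) GR) Mz" for i t j
    by (rule measurable_sigma_of_preimages[OF GR])
      (use measurable_space[OF Z] in \<open>auto simp: GR_def\<close>)
  have "indep_set (sigma_sets (space M) GR) (sigma_sets (space M) GN)"
    using indep unfolding GN_def GR_def by (rule indep_set_commute)
  note indep_noise = distr_pair_eq_pair_measure_if_indep_set[OF this GR GN _ _ _ N_GN]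
  show "distr M borel W \<Otimes>\<^sub>M distr M borel N = distr M (borel \<Otimes>\<^sub>M borel) (\<lambda>\<omega>. (W \<omega>, N \<omega>))"
    by (rule indep_noise) (simp_all add: W_def)
  show "distr M (borel \<Otimes>\<^sub>M Mz) (\<lambda>\<omega>. (W \<omega>, Z i t j \<omega>)) \<Otimes>\<^sub>M distr M borel N
      = distr M ((borel \<Otimes>\<^sub>M Mz) \<Otimes>\<^sub>M borel) (\<lambda>\<omega>. ((W \<omega>, Z i t j \<omega>), N \<omega>))"
    by (rule indep_noise) (simp_all add: W_def)
qed

lemma (in prob_space) expected_sample_loss_le_psi_star_inv:
  fixes W N :: "'a \<Rightarrow> 'w::euclidean_space" and Zs :: "'a \<Rightarrow> 'z"
  assumes [measurable]: "W \<in> borel_measurable M" "N \<in> borel_measurable M" "Zs \<in> measurable M Mz"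
    and loss_meas: "(\<lambda>(w, z). loss w z) \<in> borel_measurable (borel \<Otimes>\<^sub>M Mz)"
    and indep: "distr M (borel \<Otimes>\<^sub>M Mz) (\<lambda>\<omega>. (W \<omega>, Zs \<omega>)) \<Otimes>\<^sub>M distr M borel N
      = distr M ((borel \<Otimes>\<^sub>M Mz) \<Otimes>\<^sub>M borel) (\<lambda>\<omega>. ((W \<omega>, Zs \<omega>), N \<omega>))"
    and Zs_distr: "distr M Mz Zs = \<mu>"
    and ac: "absolutely_continuous (distr M borel W \<Otimes>\<^sub>M distr M Mz Zs)
      (distr M (borel \<Otimes>\<^sub>M Mz) (\<lambda>\<omega>. (W \<omega>, Zs \<omega>)))"
    and entropy: "integrable (distr M (borel \<Otimes>\<^sub>M Mz) (\<lambda>\<omega>. (W \<omega>, Zs \<omega>)))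
      (entropy_density (exp 1) (distr M borel W \<Otimes>\<^sub>M distr M Mz Zs)
        (distr M (borel \<Otimes>\<^sub>M Mz) (\<lambda>\<omega>. (W \<omega>, Zs \<omega>))))"
    and integrable: "integrable M (\<lambda>\<omega>. loss (W \<omega> + N \<omega>) (Zs \<omega>))"
    and b: "bminus < 0" "0 < bplus"
    and cgf_le: "\<forall>lam. bminus < ereal lam \<and> ereal lam < bplus \<longrightarrow>
      (let P = (distr M borel W \<Otimes>\<^sub>M distr M borel N) \<Otimes>\<^sub>M \<mu>;
           c = (\<integral>((w, v), z). loss (w + v) z \<partial>P);
           f = (\<lambda>((w, v), z). loss (w + v) z - c)
       in integrable P (\<lambda>x. exp (lam * f x)) \<and> cgf P f lam \<le> \<psi> lam)"
  shows "(\<integral>\<omega>. loss (W \<omega> + N \<omega>) (Zs \<omega>) \<partial>M)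
      - (\<integral>((w, v), z). loss (w + v) z \<partial>((distr M borel W \<Otimes>\<^sub>M distr M borel N) \<Otimes>\<^sub>M \<mu>))
    \<le> psi_star_inv \<psi> bplus (mutual_information (exp 1) borel Mz W Zs)"
proof -
  define F where "F = (\<lambda>((w, v), z). loss (w + v) z)"
  define c where "c = (\<integral>p. F p \<partial>((distr M borel W \<Otimes>\<^sub>M distr M borel N) \<Otimes>\<^sub>M \<mu>))"
  have [measurable]: "F \<in> borel_measurable ((borel \<Otimes>\<^sub>M borel) \<Otimes>\<^sub>M Mz)"
    using measurable_compose[OF _ loss_meas, of "\<lambda>((w, v), z). (w + v, z)"]
    unfolding F_def by (simp add: case_prod_beta')
  have "(\<integral>\<omega>. F ((W \<omega>, N \<omega>), Zs \<omega>) \<partial>M) - c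
    \<le> psi_star_inv \<psi> bplus (mutual_information (exp 1) borel Mz W Zs)"
  proof (rule expectation_le_psi_star_inv_mutual_information[OF _ _ _ indep ac entropy _ _ b(2)])
    show "integrable M (\<lambda>\<omega>. F ((W \<omega>, N \<omega>), Zs \<omega>))"
      using integrable by (simp add: F_def)
    fix lam assume lam: "0 < lam" "ereal lam < bplus"
    then have "bminus < ereal lam"
      using b by (metis ereal_less(2) less_trans zero_ereal_def)
    then show "integrable ((distr M borel W \<Otimes>\<^sub>M distr M borel N) \<Otimes>\<^sub>M distr M Mz Zs)
        (\<lambda>p. exp (lam * (F p - c))) \<and>
      cgf ((distr M borel W \<Otimes>\<^sub>M distr M borel N) \<Otimes>\<^sub>M distr M Mz Zs) (\<lambda>p. F p - c) lam \<le> \<psi> lam"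
      using cgf_le lam unfolding Zs_distr Let_def c_def F_def by (simp add: case_prod_beta')
  qed simp_all
  then show ?thesis
    by (simp add: F_def c_def)
qed

theorem theorem1:
  fixes M :: "'o measure"
    and m :: nat and n :: "nat \<Rightarrow> nat"
    and t_agg :: nat and t_c :: "nat \<Rightarrow> nat" and eps_c :: "nat \<Rightarrow> real"
    and Hyp :: "'w::euclidean_space set"
    and loss :: "'w \<Rightarrow> 'z \<Rightarrow> real"
    and Mz :: "'z measure" and \<mu> :: "nat \<Rightarrow> 'z measure"
    and Wloc :: "nat \<Rightarrow> nat \<Rightarrow> 'o \<Rightarrow> 'w"
    and Nn :: "nat \<Rightarrow> 'o \<Rightarrow> 'w" and s :: "nat \<Rightarrow> real"
    and Z :: "nat \<Rightarrow> nat \<Rightarrow> nat \<Rightarrow> 'o \<Rightarrow> 'z"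
    and W N wstar :: "'o \<Rightarrow> 'w"
    and \<psi> :: "nat \<Rightarrow> real \<Rightarrow> real" and bminus bplus :: "nat \<Rightarrow> ereal"
  assumes M: "prob_space M"
    and m_pos: "0 < m" and n_pos: "\<forall>i<m. 0 < n i"
    and times: "\<forall>i<m. 1 \<le> t_c i \<and> t_c i \<le> t_agg"
    and privacy: "\<forall>i<m. 0 \<le> eps_c i"
    and W_def: "W = (\<lambda>\<omega>. (1 / real m) *\<^sub>R (\<Sum>i<m. Wloc i (t_c i) \<omega>))"
    and N_def: "N = (\<lambda>\<omega>. (1 / real m) *\<^sub>R (\<Sum>i<m. Nn i \<omega>))"
    and laplace: "\<forall>i<m. 0 < s i \<and>
        distributed M lborel (Nn i) (\<lambda>x. ennreal (laplace_vec_density (s i) x))"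
    and noise_indep: "prob_space.indep_vars M (\<lambda>_. borel) Nn {..<m}"
    and meas: "\<forall>i t. Wloc i t \<in> borel_measurable M"
        "\<forall>i t j. Z i t j \<in> measurable M Mz"
    and noise_indep_rest: "prob_space.indep_set M
        (sigma_sets (space M) (\<Union>i<m. {Nn i -` A \<inter> space M | A. A \<in> sets borel}))
        (sigma_sets (space M)
          ((\<Union>i t. {Wloc i t -` A \<inter> space M | A. A \<in> sets borel}) \<union>
           (\<Union>i t j. {Z i t j -` A \<inter> space M | A. A \<in> sets Mz})))"
    and W_in: "\<forall>\<omega>\<in>space M. W \<omega> \<in> Hyp"
    and loss_meas: "(\<lambda>(w, z). loss w z) \<in> borel_measurable (borel \<Otimes>\<^sub>M Mz)"
    and target: "\<forall>i<m. prob_space (\<mu> i) \<and> sets (\<mu> i) = sets Mz \<and>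
        (\<forall>j<n i. distr M Mz (Z i t_agg j) = \<mu> i)"
    and pop_integrable: "\<forall>i<m. \<forall>w\<in>Hyp. integrable (\<mu> i) (loss w)"
    and wstar_erm: "\<forall>\<omega>\<in>space M. wstar \<omega> \<in> Hyp \<and>
        (\<forall>w\<in>Hyp. global_emp_loss loss m n (\<lambda>i j. Z i t_agg j \<omega>) (wstar \<omega>)
                 \<le> global_emp_loss loss m n (\<lambda>i j. Z i t_agg j \<omega>) w)"
    and integrable_emp: "\<forall>i<m. \<forall>j<n i.
        integrable M (\<lambda>\<omega>. loss (W \<omega> + N \<omega>) (Z i t_agg j \<omega>)) \<and>
        integrable M (\<lambda>\<omega>. loss (wstar \<omega>) (Z i t_agg j \<omega>))"
    and integrable_pop: "integrable M (\<lambda>\<omega>. avg_pop_loss loss m n \<mu> (W \<omega> + N \<omega>))"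
        "integrable M (\<lambda>\<omega>. avg_pop_loss loss m n \<mu> (wstar \<omega>))"
    and cgf_bound: "\<forall>i<m. bminus i < 0 \<and> 0 < bplus i \<and>
        integrable ((distr M borel W \<Otimes>\<^sub>M distr M borel N) \<Otimes>\<^sub>M \<mu> i)
          (\<lambda>((w, v), z). loss (w + v) z) \<and>
        (\<forall>lam. bminus i < ereal lam \<and> ereal lam < bplus i \<longrightarrow>
          (let P = (distr M borel W \<Otimes>\<^sub>M distr M borel N) \<Otimes>\<^sub>M \<mu> i;
               c = (\<integral>((w, v), z). loss (w + v) z \<partial>P);
               f = (\<lambda>((w, v), z). loss (w + v) z - c)
           in integrable P (\<lambda>x. exp (lam * f x)) \<and> cgf P f lam \<le> \<psi> i lam))"
    and MI_finite: "\<forall>i<m. \<forall>j<n i.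
        absolutely_continuous (distr M borel W \<Otimes>\<^sub>M distr M Mz (Z i t_agg j))
          (distr M (borel \<Otimes>\<^sub>M Mz) (\<lambda>\<omega>. (W \<omega>, Z i t_agg j \<omega>))) \<and>
        integrable (distr M (borel \<Otimes>\<^sub>M Mz) (\<lambda>\<omega>. (W \<omega>, Z i t_agg j \<omega>)))
          (entropy_density (exp 1) (distr M borel W \<Otimes>\<^sub>M distr M Mz (Z i t_agg j))
             (distr M (borel \<Otimes>\<^sub>M Mz) (\<lambda>\<omega>. (W \<omega>, Z i t_agg j \<omega>))))"
  shows "(\<integral>\<omega>. global_emp_loss loss m n (\<lambda>i j. Z i t_agg j \<omega>) (W \<omega> + N \<omega>)
              - global_emp_loss loss m n (\<lambda>i j. Z i t_agg j \<omega>) (wstar \<omega>) \<partial>M)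
         \<le> (\<Sum>i<m. client_weight m n i * (1 / real (n i)) *
               (\<Sum>j<n i. psi_star_inv (\<psi> i) (bplus i)
                  (prob_space.mutual_information M (exp 1) borel Mz W (Z i t_agg j))))
           + (\<integral>\<omega>. avg_pop_loss loss m n \<mu> (wstar \<omega>) \<partial>M)
           - (\<integral>\<omega>. global_emp_loss loss m n (\<lambda>i j. Z i t_agg j \<omega>) (wstar \<omega>) \<partial>M)
           + (\<integral>\<omega>. avg_pop_loss loss m n \<mu> (W \<omega> + N \<omega>) - avg_pop_loss loss m n \<mu> (wstar \<omega>) \<partial>M)
       \<and> ((\<forall>w\<in>Hyp. \<forall>\<omega>\<in>space M. w + N \<omega> \<in> Hyp) \<longrightarrow>
           ereal (\<integral>\<omega>. avg_pop_loss loss m n \<mu> (W \<omega> + N \<omega>) - avg_pop_loss loss m n \<mu> (wstar \<omega>) \<partial>M)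
           \<le> (SUP w\<in>Hyp. ereal (avg_pop_loss loss m n \<mu> w))
              - ereal (\<integral>\<omega>. avg_pop_loss loss m n \<mu> (wstar \<omega>) \<partial>M))"
proof -
  interpret prob_space M by (rule M)
  have [measurable]: "Wloc i t \<in> borel_measurable M" "Z i t j \<in> measurable M Mz" for i t j
    using meas by auto
  have Nn_measurable: "Nn i \<in> borel_measurable M" if "i < m" for i
    using laplace that unfolding distributed_def by auto
  have [measurable]: "W \<in> borel_measurable M" "N \<in> borel_measurable M"
    unfolding W_def N_def using Nn_measurable by measurable
  note indep = noise_independent_of_model_and_data[OF noise_indep_rest _ _ Nn_measurable W_def N_def]
  define c where "c i = (\<integral>((w, v), z). loss (w + v) z \<partial>((distr M borel W \<Otimes>\<^sub>M distr M borel N) \<Otimes>\<^sub>M \<mu> i))" for i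
  have sample_bound: "(\<integral>\<omega>. loss (W \<omega> + N \<omega>) (Z i t_agg j \<omega>) \<partial>M) - c i
      \<le> psi_star_inv (\<psi> i) (bplus i) (mutual_information (exp 1) borel Mz W (Z i t_agg j))"
    if "i < m" "j < n i" for i j
    unfolding c_def using that target MI_finite integrable_emp cgf_bound
    by (intro expected_sample_loss_le_psi_star_inv[OF _ _ _ loss_meas indep(2), where bminus = "bminus i"]) auto
  have pop_risk: "integrable M (\<lambda>\<omega>. pop_risk loss (\<mu> i) (W \<omega> + N \<omega>))"
    "(\<integral>\<omega>. pop_risk loss (\<mu> i) (W \<omega> + N \<omega>) \<partial>M) = c i" if "i < m" for i
    using expectation_integral_indep_pair[OF _ _ indep(1), of "\<mu> i" "\<lambda>((w, v), z). loss (w + v) z"]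
      target cgf_bound that
    by (auto simp: pop_risk_def c_def prob_space_imp_sigma_finite)
  have "(\<integral>\<omega>. global_emp_loss loss m n (\<lambda>i j. Z i t_agg j \<omega>) (W \<omega> + N \<omega>) \<partial>M)
    \<le> (\<Sum>i<m. client_weight m n i * (1 / real (n i)) *
          (\<Sum>j<n i. psi_star_inv (\<psi> i) (bplus i) (mutual_information (exp 1) borel Mz W (Z i t_agg j))))
      + (\<Sum>i<m. client_weight m n i * c i)"
    by (rule expected_global_emp_loss_le) (use n_pos integrable_emp sample_bound in auto)
  also have "(\<Sum>i<m. client_weight m n i * c i) = (\<integral>\<omega>. avg_pop_loss loss m n \<mu> (W \<omega> + N \<omega>) \<partial>M)"
    using pop_risk by (simp add: avg_pop_loss_def Bochner_Integration.integral_sum)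
  moreover have "integrable M (\<lambda>\<omega>. global_emp_loss loss m n (\<lambda>i j. Z i t_agg j \<omega>) (W \<omega> + N \<omega>))"
    "integrable M (\<lambda>\<omega>. global_emp_loss loss m n (\<lambda>i j. Z i t_agg j \<omega>) (wstar \<omega>))"
    using integrable_emp by (auto intro: integral_global_emp_loss(1))
  moreover have "(\<forall>w\<in>Hyp. \<forall>\<omega>\<in>space M. w + N \<omega> \<in> Hyp) \<longrightarrow>
      ereal (\<integral>\<omega>. avg_pop_loss loss m n \<mu> (W \<omega> + N \<omega>) - avg_pop_loss loss m n \<mu> (wstar \<omega>) \<partial>M)
      \<le> (SUP w\<in>Hyp. ereal (avg_pop_loss loss m n \<mu> w))
        - ereal (\<integral>\<omega>. avg_pop_loss loss m n \<mu> (wstar \<omega>) \<partial>M)"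
    using W_in integrable_pop
    by (intro impI integral_diff_le_SUP_minus[where u = "\<lambda>\<omega>. W \<omega> + N \<omega>"]) auto
  ultimately show ?thesis
    using integrable_pop by (simp add: integral_diff)
qed

end
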